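(* For any HPS $h$ and any H-Qbricks program $p$, let $S=\{\eta:\xi(h)(\eta)\ne0\}$. If $\xi([\![p]\!](h))(\eta)\neq 0$, then $\eta\ge\eta'$ for some $\eta'\in S$. In particular, if $\xi(h)$ and $\xi(h')$ have disjoint supports of histories, all of the same length $l$, and $p,q$ are any two programs, then $\xi([\![p]\!](h))$ and $\xi([\![q]\!](h'))$ have disjoint supports.
   Context: HPS: $h=\langle P,o,s\rangle_{su}$ with $su$ a finite set of Boolean path variables; $o_{Qu}$ a finite map from quantum addresses to Boolean polynomials in the path variables; $o_{Cl}$ a stack of maps from classical addresses to such polynomials recording classical values at successive time steps (top = current); $P$ a dyadic-coefficient polynomial; $s$ a real scalar expression. A history $\eta$ is a full instantiation of a classical stack, $|\eta|$ its height; $\eta\le\eta'$ means $|\eta|\le|\eta'|$ and the $|\eta|$ oldest entries of $\eta'$ coincide with $\eta$. $\xi(h)(\eta)=\sum_{\vec y\in\{0,1\}^{su},o_{Cl}(\vec y)=\eta}s(\vec y)e^{2\pi iP(\vec y)}|o_{Qu}(\vec y)\rangle$; its support is the set of $\eta$ with $\xi(h)(\eta)\ne0$. $h_1\boxplus h_2$: support $su_1\cup su_2\cup\{y_f\}$, $y_f$ fresh, equal to $h_1$ (scalar times $\prod_{y\in su_2\setminus su_1}y$) on $y_f=0$ and $h_2$ (scalar times $\prod_{y\in su_1\setminus su_2}y$) on $y_f=1$. Programs: Skip; Init $q$; Apply $G(q)$, $G\in\{H,X\}\cup\{Z_k\}$; Measure$(q,c)$; $c_1:=f(c_2)$; $p;p'$;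 For with constant bounds; If $b$ then $p$ else $p'$ ($b$ classical, or quantum with unitary branches disjoint from $b$'s registers). Semantics ($\lceil q\rceil$ = current contents): Skip identity; Init sets $q$ to $0$; $H$: fresh $y$ in support, scalar times $1/\sqrt2$, phase plus $y\lceil q\rceil/2$, $q:=y$; $X$: $q:=1\oplus\lceil q\rceil$; $Z_k$: phase plus $\lceil q\rceil/2^k$; Measure$(q,c)$ pushes onto $o_{Cl}$ a copy of the top entry with $c$ holding $\lceil q\rceil$; $c_1:=f(c_2)$ pushes a copy with $c_1$ holding $f(\lceil c_2\rceil)$; sequencing is composition; For unfolds; $[\![\mathrm{If}\,b\,\mathrm{then}\,p\,\mathrm{else}\,p']\!]h=[\![p]\!](b\cdot h)\boxplus[\![p']\!]((1-b)\cdot h)$, $b\cdot h$ multiplying the scalar by $b$. *)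

theory Defs
  imports "HOL-Analysis.Analysis" "HOL-Library.Sublist"
begin

datatype bexp = BConst bool | BVar nat | BXor bexp bexp | BAnd bexp bexp

primrec beval :: "(nat \<Rightarrow> bool) \<Rightarrow> bexp \<Rightarrow> bool" where
  "beval v (BConst b) = b"
| "beval v (BVar y) = v y"
| "beval v (BXor a b) = (beval v a \<noteq> beval v b)"
| "beval v (BAnd a b) = (beval v a \<and> beval v b)"

primrec bvars :: "bexp \<Rightarrow> nat set" where
  "bvars (BConst b) = {}"
| "bvars (BVar y) = {y}"
| "bvars (BXor a b) = bvars a \<union> bvars b"
| "bvars (BAnd a b) = bvars a \<union> bvars b"

datatype pexp = PConst int nat | PVar nat | PBool bexp | PAdd pexp pexp | PMul pexp pexp

primrec peval :: "(nat \<Rightarrow> bool) \<Rightarrow> pexp \<Rightarrow> real" where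
  "peval v (PConst k n) = of_int k / 2 ^ n"
| "peval v (PVar y) = of_bool (v y)"
| "peval v (PBool e) = of_bool (beval v e)"
| "peval v (PAdd a b) = peval v a + peval v b"
| "peval v (PMul a b) = peval v a * peval v b"

primrec pvars :: "pexp \<Rightarrow> nat set" where
  "pvars (PConst k n) = {}"
| "pvars (PVar y) = {y}"
| "pvars (PBool e) = bvars e"
| "pvars (PAdd a b) = pvars a \<union> pvars b"
| "pvars (PMul a b) = pvars a \<union> pvars b"

datatype sexp = SConst real | SBool bexp | SAdd sexp sexp | SMul sexp sexp | SNeg sexp

primrec seval :: "(nat \<Rightarrow> bool) \<Rightarrow> sexp \<Rightarrow> real" where
  "seval v (SConst r) = r"
| "seval v (SBool e) = of_bool (beval v e)"
| "seval v (SAdd a b) = seval v a + seval v b"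
| "seval v (SMul a b) = seval v a * seval v b"
| "seval v (SNeg a) = - seval v a"

primrec svars :: "sexp \<Rightarrow> nat set" where
  "svars (SConst r) = {}"
| "svars (SBool e) = bvars e"
| "svars (SAdd a b) = svars a \<union> svars b"
| "svars (SMul a b) = svars a \<union> svars b"
| "svars (SNeg a) = svars a"

text \<open>The classical stack is a list, oldest entry first; the top (current) entry is the last one.\<close>
record hps =
  hsu  :: "nat set"
  hP   :: pexp
  hs   :: sexp
  hoQu :: "nat \<rightharpoonup> bexp"
  hoCl :: "(nat \<rightharpoonup> bexp) list"

definition top :: "(nat \<rightharpoonup> bexp) list \<Rightarrow> (nat \<rightharpoonup> bexp)" where
  "top st = (if st = [] then Map.empty else last st)"

definition wf_hps :: "hps \<Rightarrow> bool" where
  "wf_hps h \<longleftrightarrow> finite (hsu h) \<and> finite (dom (hoQu h))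
     \<and> pvars (hP h) \<subseteq> hsu h \<and> svars (hs h) \<subseteq> hsu h
     \<and> (\<forall>e \<in> ran (hoQu h). bvars e \<subseteq> hsu h)
     \<and> (\<forall>m \<in> set (hoCl h). finite (dom m) \<and> (\<forall>e \<in> ran m. bvars e \<subseteq> hsu h))"

text \<open>Instantiations of the path variables of \<open>su\<close> (variables outside \<open>su\<close> are fixed to 0).\<close>
definition assignments :: "nat set \<Rightarrow> (nat \<Rightarrow> bool) set" where
  "assignments A = {v. \<forall>x. x \<notin> A \<longrightarrow> \<not> v x}"

type_synonym history = "(nat \<rightharpoonup> bool) list"
type_synonym basis = "nat \<rightharpoonup> bool"

definition instMap :: "(nat \<Rightarrow> bool) \<Rightarrow> (nat \<rightharpoonup> bexp) \<Rightarrow> (nat \<rightharpoonup> bool)" where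
  "instMap v m = (\<lambda>k. map_option (beval v) (m k))"

text \<open>\<open>xi h \<eta>\<close> is the (unnormalised) quantum state attached to history \<open>\<eta>\<close>,
  given by its coordinates in the computational basis.\<close>
definition xi :: "hps \<Rightarrow> history \<Rightarrow> basis \<Rightarrow> complex" where
  "xi h \<eta> = (\<lambda>b. \<Sum>v \<in> {v \<in> assignments (hsu h). map (instMap v) (hoCl h) = \<eta>
                                   \<and> instMap v (hoQu h) = b}.
              complex_of_real (seval v (hs h)) * cis (2 * pi * peval v (hP h)))"

definition hsupport :: "hps \<Rightarrow> history set" where
  "hsupport h = {\<eta>. xi h \<eta> \<noteq> (\<lambda>_. 0)}"

definition fresh :: "nat set \<Rightarrow> nat" where
  "fresh A = (LEAST n. n \<notin> A)"

definition dflt :: "(nat \<rightharpoonup> bexp) \<Rightarrow> nat \<Rightarrow> bexp" where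
  "dflt m k = (case m k of Some e \<Rightarrow> e | None \<Rightarrow> BConst False)"

definition muxb :: "nat \<Rightarrow> bexp \<Rightarrow> bexp \<Rightarrow> bexp" where
  "muxb y a b = BXor a (BAnd (BVar y) (BXor a b))"

definition mux_map :: "nat \<Rightarrow> (nat \<rightharpoonup> bexp) \<Rightarrow> (nat \<rightharpoonup> bexp) \<Rightarrow> (nat \<rightharpoonup> bexp)" where
  "mux_map y m1 m2 = (\<lambda>k. if k \<in> dom m1 \<union> dom m2 then Some (muxb y (dflt m1 k) (dflt m2 k)) else None)"

definition pad :: "nat \<Rightarrow> (nat \<rightharpoonup> bexp) list \<Rightarrow> (nat \<rightharpoonup> bexp) list" where
  "pad n st = st @ replicate (n - length st) (top st)"

definition mux_stack :: "nat \<Rightarrow> (nat \<rightharpoonup> bexp) list \<Rightarrow> (nat \<rightharpoonup> bexp) list \<Rightarrow> (nat \<rightharpoonup> bexp) list" where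
  "mux_stack y s1 s2 = (let n = max (length s1) (length s2) in map2 (mux_map y) (pad n s1) (pad n s2))"

definition varprod :: "nat set \<Rightarrow> sexp" where
  "varprod A = foldr (\<lambda>y e. SMul (SBool (BVar y)) e) (sorted_list_of_set A) (SConst 1)"

definition boxplus :: "hps \<Rightarrow> hps \<Rightarrow> hps" where
  "boxplus h1 h2 = (let yf = fresh (hsu h1 \<union> hsu h2) in
     \<lparr> hsu = hsu h1 \<union> hsu h2 \<union> {yf},
       hP = PAdd (hP h1) (PMul (PVar yf) (PAdd (hP h2) (PMul (PConst (-1) 0) (hP h1)))),
       hs = SAdd (SMul (SBool (BXor (BConst True) (BVar yf))) (SMul (hs h1) (varprod (hsu h2 - hsu h1))))
                 (SMul (SBool (BVar yf)) (SMul (hs h2) (varprod (hsu h1 - hsu h2)))),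
       hoQu = mux_map yf (hoQu h1) (hoQu h2),
       hoCl = mux_stack yf (hoCl h1) (hoCl h2) \<rparr>)"

datatype gate = GH | GX | GZ nat

datatype cond = CConst bool | CCl nat | CQu nat | CNot cond | CAnd cond cond | CXor cond cond

primrec cregs :: "cond \<Rightarrow> nat set" where
  "cregs (CConst b) = {}" | "cregs (CCl c) = {c}" | "cregs (CQu q) = {}"
| "cregs (CNot a) = cregs a" | "cregs (CAnd a b) = cregs a \<union> cregs b"
| "cregs (CXor a b) = cregs a \<union> cregs b"

primrec qregs :: "cond \<Rightarrow> nat set" where
  "qregs (CConst b) = {}" | "qregs (CCl c) = {}" | "qregs (CQu q) = {q}"
| "qregs (CNot a) = qregs a" | "qregs (CAnd a b) = qregs a \<union> qregs b"
| "qregs (CXor a b) = qregs a \<union> qregs b"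

text \<open>\<open>Assign c1 f c2\<close> is \<open>c1 := f(c2)\<close>; \<open>For a b body\<close> runs \<open>body i\<close> for \<open>i = a, ..., b\<close>.\<close>
datatype prog = Skip | Init nat | Apply gate nat | Measure nat nat
  | Assign nat "bool \<Rightarrow> bool" nat | Seq prog prog
  | For nat nat "nat \<Rightarrow> prog" | If cond prog prog

definition qval :: "hps \<Rightarrow> nat \<Rightarrow> bexp" where
  "qval h q = dflt (hoQu h) q"

definition cval :: "hps \<Rightarrow> nat \<Rightarrow> bexp" where
  "cval h c = dflt (top (hoCl h)) c"

primrec ceval :: "hps \<Rightarrow> cond \<Rightarrow> bexp" where
  "ceval h (CConst b) = BConst b"
| "ceval h (CCl c) = cval h c"
| "ceval h (CQu q) = qval h q"
| "ceval h (CNot a) = BXor (BConst True) (ceval h a)"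
| "ceval h (CAnd a b) = BAnd (ceval h a) (ceval h b)"
| "ceval h (CXor a b) = BXor (ceval h a) (ceval h b)"

definition fpoly :: "(bool \<Rightarrow> bool) \<Rightarrow> bexp \<Rightarrow> bexp" where
  "fpoly f e = BXor (BConst (f False)) (BAnd (BConst (f False \<noteq> f True)) e)"

definition scale :: "sexp \<Rightarrow> hps \<Rightarrow> hps" where
  "scale e h = h\<lparr>hs := SMul (hs h) e\<rparr>"

primrec sem :: "prog \<Rightarrow> hps \<Rightarrow> hps" where
  "sem Skip h = h"
| "sem (Init q) h = h\<lparr>hoQu := (hoQu h)(q \<mapsto> BConst False)\<rparr>"
| "sem (Apply g q) h = (case g of
     GH \<Rightarrow> (let y = fresh (hsu h) in
             h\<lparr>hsu := insert y (hsu h),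
               hs := SMul (hs h) (SConst (1 / sqrt 2)),
               hP := PAdd (hP h) (PMul (PConst 1 1) (PMul (PVar y) (PBool (qval h q)))),
               hoQu := (hoQu h)(q \<mapsto> BVar y)\<rparr>)
   | GX \<Rightarrow> h\<lparr>hoQu := (hoQu h)(q \<mapsto> BXor (BConst True) (qval h q))\<rparr>
   | GZ k \<Rightarrow> h\<lparr>hP := PAdd (hP h) (PMul (PConst 1 k) (PBool (qval h q)))\<rparr>)"
| "sem (Measure q c) h = h\<lparr>hoCl := hoCl h @ [(top (hoCl h))(c \<mapsto> qval h q)]\<rparr>"
| "sem (Assign c1 f c2) h = h\<lparr>hoCl := hoCl h @ [(top (hoCl h))(c1 \<mapsto> fpoly f (cval h c2))]\<rparr>"
| "sem (Seq p p') h = sem p' (sem p h)"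
| "sem (For a b body) h = fold (\<lambda>i. sem (body i)) [a..<Suc b] h"
| "sem (If b p p') h =
     boxplus (sem p (scale (SBool (ceval h b)) h))
             (sem p' (scale (SAdd (SConst 1) (SNeg (SBool (ceval h b)))) h))"

primrec acts :: "prog \<Rightarrow> nat set" where
  "acts Skip = {}" | "acts (Init q) = {q}" | "acts (Apply g q) = {q}"
| "acts (Measure q c) = {q}" | "acts (Assign c1 f c2) = {}"
| "acts (Seq p p') = acts p \<union> acts p'"
| "acts (For a b body) = (\<Union>i\<in>{a..b}. acts (body i))"
| "acts (If b p p') = qregs b \<union> acts p \<union> acts p'"

primrec unitary :: "prog \<Rightarrow> bool" where
  "unitary Skip = True" | "unitary (Init q) = False" | "unitary (Apply g q) = True"
| "unitary (Measure q c) = False" | "unitary (Assign c1 f c2) = False"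
| "unitary (Seq p p') = (unitary p \<and> unitary p')"
| "unitary (For a b body) = (\<forall>i\<in>{a..b}. unitary (body i))"
| "unitary (If b p p') = (cregs b = {} \<and> qregs b \<inter> (acts p \<union> acts p') = {}
                          \<and> unitary p \<and> unitary p')"

text \<open>H-Qbricks programs: conditions are classical, or quantum with unitary branches
  disjoint from the condition's registers.\<close>
primrec wf_prog :: "prog \<Rightarrow> bool" where
  "wf_prog Skip = True" | "wf_prog (Init q) = True" | "wf_prog (Apply g q) = True"
| "wf_prog (Measure q c) = True" | "wf_prog (Assign c1 f c2) = True"
| "wf_prog (Seq p p') = (wf_prog p \<and> wf_prog p')"
| "wf_prog (For a b body) = (\<forall>i\<in>{a..b}. wf_prog (body i))"
| "wf_prog (If b p p') = (wf_prog p \<and> wf_prog p' \<and>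
     (qregs b = {} \<or> (cregs b = {} \<and> unitary p \<and> unitary p'
                       \<and> qregs b \<inter> (acts p \<union> acts p') = {})))"

end

theory Submission
  imports Defs
begin

(* Write the coefficients of xi(h) as sums of amplitudes over instantiations of the path
   variables. Each primitive instruction multiplies the amplitude of an instantiation by a
   factor that depends only on the old history, the old basis state and the new path
   variables, and computes the new history and basis state from the same data, extending the
   history. Grouping the new sum by these data writes each group as the factor times an old
   coefficient xi(h)(eta)(b), so a nonzero new coefficient forces a nonzero old one whose
   history is a prefix. Scaling by the value of a condition multiplies xi(h)(eta)(b) by a
   number depending on eta and b only, so it shrinks the support. The merge of
   the two branches of a conditional splits along the fresh variable y_f into the two branch
   sums, seen through a relabelling that adds the other branch's registers to every classical
   map. Both branches only push onto the classical stack of h, so the relabelling leaves the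
   entries of that stack, and hence the prefixes from supp xi(h), unchanged.
   For the second claim, two histories of length l that are prefixes of the same history
   coincide. *)

section \<open>Instantiations of the path variables\<close>

definition amp :: "hps \<Rightarrow> (nat \<Rightarrow> bool) \<Rightarrow> complex" where
  "amp h v = complex_of_real (seval v (hs h)) * cis (2 * pi * peval v (hP h))"

definition hist :: "hps \<Rightarrow> (nat \<Rightarrow> bool) \<Rightarrow> history" where
  "hist h v = map (instMap v) (hoCl h)"

definition ket :: "hps \<Rightarrow> (nat \<Rightarrow> bool) \<Rightarrow> basis" where
  "ket h v = instMap v (hoQu h)"

lemma xi_eq_sum_amp:
  "xi h \<eta> b = (\<Sum>v | v \<in> assignments (hsu h) \<and> hist h v = \<eta> \<and> ket h v = b. amp h v)"
  by (simp add: xi_def amp_def hist_def ket_def)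

lemma in_hsupport_iff: "\<eta> \<in> hsupport h \<longleftrightarrow> (\<exists>b. xi h \<eta> b \<noteq> 0)"
  by (auto simp: hsupport_def)

lemma finite_assignments: "finite S \<Longrightarrow> finite (assignments S)"
proof -
  assume "finite S"
  moreover have "assignments S \<subseteq> (\<lambda>T x. x \<in> T) ` Pow S"
  proof
    fix v assume "v \<in> assignments S"
    then have "v = (\<lambda>x. x \<in> {x \<in> S. v x})"
      by (auto simp: assignments_def)
    then show "v \<in> (\<lambda>T x. x \<in> T) ` Pow S"
      by blast
  qed
  ultimately show ?thesis
    by (meson finite_Pow_iff finite_imageI finite_subset)
qed

lemma dom_instMap [simp]: "dom (instMap v m) = dom m"
  by (auto simp: instMap_def)

lemma beval_cong: "(\<And>x. x \<in> bvars e \<Longrightarrow> u x = v x) \<Longrightarrow> beval u e = beval v e"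
  by (induct e) auto

lemma peval_cong: "(\<And>x. x \<in> pvars e \<Longrightarrow> u x = v x) \<Longrightarrow> peval u e = peval v e"
  by (induct e) (auto cong: beval_cong)

lemma seval_cong: "(\<And>x. x \<in> svars e \<Longrightarrow> u x = v x) \<Longrightarrow> seval u e = seval v e"
  by (induct e) (auto cong: beval_cong)

lemma instMap_cong:
  "(\<And>e x. e \<in> ran m \<Longrightarrow> x \<in> bvars e \<Longrightarrow> u x = v x) \<Longrightarrow> instMap u m = instMap v m"
  unfolding instMap_def
proof
  fix k assume agree: "\<And>e x. e \<in> ran m \<Longrightarrow> x \<in> bvars e \<Longrightarrow> u x = v x"
  show "map_option (beval u) (m k) = map_option (beval v) (m k)"
    by (cases "m k") (simp_all, metis beval_cong agree ranI)
qed

lemma amp_cong: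
  assumes "wf_hps h" "\<And>x. x \<in> hsu h \<Longrightarrow> u x = v x"
  shows "amp h u = amp h v"
proof -
  have "seval u (hs h) = seval v (hs h)" "peval u (hP h) = peval v (hP h)"
    using assms unfolding wf_hps_def by (blast intro: seval_cong peval_cong)+
  then show ?thesis
    by (simp add: amp_def)
qed

lemma hist_cong: "wf_hps h \<Longrightarrow> (\<And>x. x \<in> hsu h \<Longrightarrow> u x = v x) \<Longrightarrow> hist h u = hist h v"
  unfolding hist_def wf_hps_def by (intro map_cong refl instMap_cong) blast

lemma ket_cong: "wf_hps h \<Longrightarrow> (\<And>x. x \<in> hsu h \<Longrightarrow> u x = v x) \<Longrightarrow> ket h u = ket h v"
  unfolding ket_def wf_hps_def by (intro instMap_cong) blast

definition vals_in :: "nat set \<Rightarrow> (nat \<Rightarrow> bool) \<Rightarrow> nat \<Rightarrow> bool" where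
  "vals_in S v = (\<lambda>x. x \<in> S \<and> v x)"

definition vals_out :: "nat set \<Rightarrow> (nat \<Rightarrow> bool) \<Rightarrow> nat \<Rightarrow> bool" where
  "vals_out S v = (\<lambda>x. x \<notin> S \<and> v x)"

lemma sum_nonzero_fibre:
  assumes "finite S" "sum f S \<noteq> (0 :: 'a :: comm_monoid_add)"
  obtains x where "x \<in> S" "sum f {y \<in> S. g y = g x} \<noteq> 0"
proof -
  have "sum f S = (\<Sum>k \<in> g ` S. sum f {y \<in> S. g y = k})"
    by (rule sum.image_gen[OF assms(1)])
  then obtain k where "k \<in> g ` S" "sum f {y \<in> S. g y = k} \<noteq> 0"
    using assms(2) by (metis (no_types, lifting) sum.not_neutral_contains_not_neutral)
  then show thesis
    using that by blast
qed

lemma hsupport_of_factored_sum: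
  fixes a :: "(nat \<Rightarrow> bool) \<Rightarrow> complex" and obs :: "(nat \<Rightarrow> bool) \<Rightarrow> 'o"
  assumes wf: "wf_hps h" and U: "finite U" "hsu h \<subseteq> U"
    and P: "\<And>v. P (vals_out (hsu h) v) = P v"
    and factor: "\<And>v. v \<in> assignments U \<Longrightarrow> P v \<Longrightarrow>
        a v = amp h v * F (hist h v) (ket h v) (vals_out (hsu h) v)
        \<and> obs v = G (hist h v) (ket h v) (vals_out (hsu h) v)"
    and nonzero: "(\<Sum>v | v \<in> assignments U \<and> P v \<and> obs v = x. a v) \<noteq> 0"
  shows "\<exists>v \<in> assignments U. P v \<and> obs v = x \<and> hist h v \<in> hsupport h"
proof -
  define S where "S = {v \<in> assignments U. P v \<and> obs v = x}"
  define key where "key v = (hist h v, ket h v, vals_out (hsu h) v)" for v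
  have "finite S"
    using finite_assignments[OF U(1)] by (simp add: S_def)
  then obtain v0 where v0: "v0 \<in> S" and fibre: "sum a {v \<in> S. key v = key v0} \<noteq> 0"
    using nonzero sum_nonzero_fibre unfolding S_def by blast
  define \<eta> b w where "\<eta> = hist h v0" and "b = ket h v0" and "w = vals_out (hsu h) v0"
  have key_v0: "key v0 = (\<eta>, b, w)"
    by (simp add: key_def \<eta>_def b_def w_def)
  have w_out: "w y \<Longrightarrow> y \<in> U - hsu h" for y
    using v0 by (auto simp: w_def vals_out_def S_def assignments_def)
  define T where "T = {u \<in> assignments (hsu h). hist h u = \<eta> \<and> ket h u = b}"
  \<comment> \<open>The fibre is in bijection with the instantiations of \<open>h\<close> with history \<open>\<eta>\<close> and basis
    state \<open>b\<close>: split off, resp. add back, the common outer part \<open>w\<close>.\<close>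
  have "sum a {v \<in> S. key v = key v0} = (\<Sum>u \<in> T. amp h u * F \<eta> b w)"
  proof (rule sum.reindex_bij_witness[where i = "\<lambda>u y. u y \<or> w y" and j = "vals_in (hsu h)"])
    fix v assume "v \<in> {v \<in> S. key v = key v0}"
    then have v: "v \<in> assignments U" "P v" "hist h v = \<eta>" "ket h v = b" "vals_out (hsu h) v = w"
      unfolding key_v0 by (auto simp: S_def key_def)
    have agree: "y \<in> hsu h \<Longrightarrow> vals_in (hsu h) v y = v y" for y
      by (simp add: vals_in_def)
    show "(\<lambda>y. vals_in (hsu h) v y \<or> w y) = v"
      using v(5) by (auto simp: vals_in_def vals_out_def)
    show "vals_in (hsu h) v \<in> T"
      using v hist_cong[OF wf agree] ket_cong[OF wf agree]
      by (auto simp: T_def assignments_def vals_in_def)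
    show "amp h (vals_in (hsu h) v) * F \<eta> b w = a v"
      using factor[OF v(1,2)] v amp_cong[OF wf agree] by simp
  next
    fix u assume "u \<in> T"
    then have u: "u \<in> assignments (hsu h)" "hist h u = \<eta>" "ket h u = b"
      by (auto simp: T_def)
    let ?v = "\<lambda>y. u y \<or> w y"
    have agree: "y \<in> hsu h \<Longrightarrow> ?v y = u y" for y
      using w_out by blast
    have out: "vals_out (hsu h) ?v = w"
      using u(1) w_out by (auto simp: vals_out_def assignments_def)
    have "P ?v \<longleftrightarrow> P w"
      using P[of ?v] by (simp add: out)
    then have "P ?v"
      using P[of v0] v0 by (simp add: w_def S_def)
    then have v: "?v \<in> assignments U" "P ?v"
      using u(1) U(2) w_out by (auto simp: assignments_def)
    show "vals_in (hsu h) ?v = u"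
      using u(1) w_out by (auto simp: vals_in_def assignments_def)
    have "hist h ?v = \<eta>" "ket h ?v = b"
      using u hist_cong[OF wf agree] ket_cong[OF wf agree] by simp_all
    moreover have "obs ?v = obs v0"
      using factor[OF v] factor v0 calculation out by (auto simp: S_def \<eta>_def b_def w_def)
    ultimately show "?v \<in> {v \<in> S. key v = key v0}"
      using v v0 out unfolding key_v0 by (simp add: S_def key_def)
  qed
  also have "\<dots> = F \<eta> b w * xi h \<eta> b"
    by (simp add: xi_eq_sum_amp T_def sum_distrib_left mult.commute)
  finally have "hist h v0 \<in> hsupport h"
    using fibre by (auto simp: in_hsupport_iff \<eta>_def)
  then show ?thesis
    using v0 by (auto simp: S_def)
qed

definition support_extends :: "hps \<Rightarrow> hps \<Rightarrow> bool" where
  "support_extends h h' \<longleftrightarrow> (\<forall>\<eta>' \<in> hsupport h'. \<exists>\<eta> \<in> hsupport h. prefix \<eta> \<eta>')"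

lemma support_extends_refl: "support_extends h h"
  by (auto simp: support_extends_def)

lemma support_extends_trans:
  "support_extends h1 h2 \<Longrightarrow> support_extends h2 h3 \<Longrightarrow> support_extends h1 h3"
  unfolding support_extends_def by (meson prefix_order.trans)

lemma support_extendsI_factored:
  assumes wf: "wf_hps h" and "finite (hsu h')" "hsu h \<subseteq> hsu h'"
    and factor: "\<And>v. v \<in> assignments (hsu h') \<Longrightarrow>
        amp h' v = amp h v * F (hist h v) (ket h v) (vals_out (hsu h) v)
        \<and> hist h' v = Gh (hist h v) (ket h v) (vals_out (hsu h) v)
        \<and> ket h' v = Gk (hist h v) (ket h v) (vals_out (hsu h) v)
        \<and> prefix (hist h v) (hist h' v)"
  shows "support_extends h h'"
  unfolding support_extends_def
proof
  fix \<eta>' assume "\<eta>' \<in> hsupport h'"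
  then obtain b' where "xi h' \<eta>' b' \<noteq> 0"
    by (auto simp: in_hsupport_iff)
  then have "(\<Sum>v | v \<in> assignments (hsu h') \<and> True \<and> (hist h' v, ket h' v) = (\<eta>', b'). amp h' v) \<noteq> 0"
    by (simp add: xi_eq_sum_amp)
  from hsupport_of_factored_sum[OF wf assms(2,3) _ _ this,
      where F = F and G = "\<lambda>\<eta> b w. (Gh \<eta> b w, Gk \<eta> b w)"] factor
  obtain v where "v \<in> assignments (hsu h')" "hist h' v = \<eta>'" "hist h v \<in> hsupport h"
    by auto
  then show "\<exists>\<eta> \<in> hsupport h. prefix \<eta> \<eta>'"
    using factor by blast
qed

section \<open>Primitive instructions\<close>

lemma instMap_upd [simp]: "instMap v (m(k \<mapsto> e)) = (instMap v m)(k \<mapsto> beval v e)"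
  by (auto simp: instMap_def)

definition hist_top :: "history \<Rightarrow> (nat \<rightharpoonup> bool)" where
  "hist_top \<eta> = (if \<eta> = [] then Map.empty else last \<eta>)"

lemma instMap_top: "instMap v (top s) = hist_top (map (instMap v) s)"
  by (auto simp: top_def hist_top_def instMap_def last_map)

lemma beval_dflt: "beval v (dflt m k) \<longleftrightarrow> instMap v m k = Some True"
  by (cases "m k") (auto simp: dflt_def instMap_def)

lemma beval_qval: "beval v (qval h q) \<longleftrightarrow> ket h v q = Some True"
  by (simp add: qval_def ket_def beval_dflt)

lemma beval_cval: "beval v (cval h c) \<longleftrightarrow> hist_top (hist h v) c = Some True"
  by (simp add: cval_def hist_def beval_dflt instMap_top)

lemma beval_fpoly: "beval v (fpoly f e) = f (beval v e)"
  by (cases "beval v e") (auto simp: fpoly_def)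

lemma fresh_notin: "finite X \<Longrightarrow> fresh X \<notin> X"
  unfolding fresh_def by (metis LeastI_ex ex_new_if_finite infinite_UNIV_nat)

lemma support_extends_Init: "wf_hps h \<Longrightarrow> support_extends h (sem (Init q) h)"
  by (rule support_extendsI_factored[where F = "\<lambda>_ _ _. 1" and Gh = "\<lambda>\<eta> _ _. \<eta>"
        and Gk = "\<lambda>_ b _. b(q \<mapsto> False)"])
     (auto simp: wf_hps_def amp_def hist_def ket_def)

lemma support_extends_Apply:
  assumes wf: "wf_hps h"
  shows "support_extends h (sem (Apply g q) h)"
proof (cases g)
  case GH
  define y where "y = fresh (hsu h)"
  have fin: "finite (hsu h)"
    using wf by (simp add: wf_hps_def)
  then have "vals_out (hsu h) v y = v y" for v
    using fresh_notin by (simp add: vals_out_def y_def)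
  then show ?thesis
    using fin unfolding GH
    by (intro support_extendsI_factored[OF wf,
          where F = "\<lambda>_ b w. complex_of_real (1 / sqrt 2) * cis (pi * of_bool (w y \<and> b q = Some True))"
          and Gh = "\<lambda>\<eta> _ _. \<eta>" and Gk = "\<lambda>_ b w. b(q \<mapsto> w y)"])
       (auto simp: Let_def amp_def hist_def ket_def beval_qval cis_mult distrib_left
         y_def[symmetric])
next
  case GX
  then show ?thesis
    using wf
    by (intro support_extendsI_factored[where F = "\<lambda>_ _ _. 1" and Gh = "\<lambda>\<eta> _ _. \<eta>"
          and Gk = "\<lambda>_ b _. b(q \<mapsto> b q \<noteq> Some True)"])
       (auto simp: wf_hps_def amp_def hist_def ket_def beval_qval)
next
  case (GZ k)
  then show ?thesis
    using wf
    by (intro support_extendsI_factored[where Gh = "\<lambda>\<eta> _ _. \<eta>" and Gk = "\<lambda>_ b _. b"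
          and F = "\<lambda>_ b _. cis (2 * pi * (of_bool (b q = Some True) / 2 ^ k))"])
       (auto simp: wf_hps_def amp_def hist_def ket_def beval_qval cis_mult distrib_left)
qed

lemma support_extends_Measure: "wf_hps h \<Longrightarrow> support_extends h (sem (Measure q c) h)"
  by (rule support_extendsI_factored[where F = "\<lambda>_ _ _. 1" and Gk = "\<lambda>_ b _. b"
        and Gh = "\<lambda>\<eta> b _. \<eta> @ [(hist_top \<eta>)(c \<mapsto> b q = Some True)]"])
     (auto simp: wf_hps_def amp_def hist_def ket_def beval_qval instMap_top)

lemma support_extends_Assign: "wf_hps h \<Longrightarrow> support_extends h (sem (Assign c1 f c2) h)"
  by (rule support_extendsI_factored[where F = "\<lambda>_ _ _. 1" and Gk = "\<lambda>_ b _. b"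
        and Gh = "\<lambda>\<eta> _ _. \<eta> @ [(hist_top \<eta>)(c1 \<mapsto> f (hist_top \<eta> c2 = Some True))]"])
     (auto simp: wf_hps_def amp_def hist_def ket_def beval_cval beval_fpoly instMap_top)

primrec cond_holds :: "(nat \<rightharpoonup> bool) \<Rightarrow> basis \<Rightarrow> cond \<Rightarrow> bool" where
  "cond_holds m b (CConst x) = x"
| "cond_holds m b (CCl c) = (m c = Some True)"
| "cond_holds m b (CQu q) = (b q = Some True)"
| "cond_holds m b (CNot a) = (\<not> cond_holds m b a)"
| "cond_holds m b (CAnd a a') = (cond_holds m b a \<and> cond_holds m b a')"
| "cond_holds m b (CXor a a') = (cond_holds m b a \<noteq> cond_holds m b a')"

lemma beval_ceval: "beval v (ceval h c) = cond_holds (hist_top (hist h v)) (ket h v) c"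
  by (induct c) (auto simp: beval_qval beval_cval)

lemma xi_scale:
  assumes "\<And>v. seval v e = g (hist h v) (ket h v)"
  shows "xi (scale e h) \<eta> b = complex_of_real (g \<eta> b) * xi h \<eta> b"
proof -
  have "hist (scale e h) = hist h" "ket (scale e h) = ket h"
    by (simp_all add: scale_def hist_def ket_def fun_eq_iff)
  moreover have "amp (scale e h) v = complex_of_real (g (hist h v) (ket h v)) * amp h v" for v
    using assms by (simp add: scale_def amp_def)
  ultimately show ?thesis
    by (simp add: xi_eq_sum_amp sum_distrib_left scale_def)
qed

lemma support_extends_scale:
  assumes "\<And>v. seval v e = g (hist h v) (ket h v)"
  shows "support_extends h (scale e h)"
proof -
  have "hsupport (scale e h) \<subseteq> hsupport h"
    by (auto simp: in_hsupport_iff xi_scale[OF assms])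
  then show ?thesis
    by (auto simp: support_extends_def)
qed

section \<open>Merging the branches of a conditional\<close>

abbreviation merge_var :: "hps \<Rightarrow> hps \<Rightarrow> nat" where
  "merge_var h1 h2 \<equiv> fresh (hsu h1 \<union> hsu h2)"

abbreviation merge_height :: "hps \<Rightarrow> hps \<Rightarrow> nat" where
  "merge_height h1 h2 \<equiv> max (length (hoCl h1)) (length (hoCl h2))"

(* The value of mux_map at an instantiation: the entry of the selected branch, with the
   registers known only to the other branch (K) added with value False. *)
definition relabel :: "(nat \<rightharpoonup> bool) \<Rightarrow> nat set \<Rightarrow> (nat \<rightharpoonup> bool)" where
  "relabel m K = (\<lambda>k. if k \<in> dom m \<union> K then Some (m k = Some True) else None)"

definition pad_hist :: "nat \<Rightarrow> history \<Rightarrow> history" where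
  "pad_hist N \<eta> = \<eta> @ replicate (N - length \<eta>) (hist_top \<eta>)"

definition relabel_hist :: "nat \<Rightarrow> (nat \<rightharpoonup> bexp) list \<Rightarrow> history \<Rightarrow> history" where
  "relabel_hist N s \<eta> = map2 relabel (pad_hist N \<eta>) (map dom (pad N s))"

lemma instMap_mux_map:
  "instMap v (mux_map y m1 m2) =
     (if v y then relabel (instMap v m2) (dom m1) else relabel (instMap v m1) (dom m2))"
  by (auto simp: fun_eq_iff instMap_def mux_map_def relabel_def muxb_def beval_dflt
      dom_instMap[unfolded instMap_def])

lemma map_instMap_mux_map:
  "map (instMap v) (map2 (mux_map y) xs ys) =
     (if v y then map2 relabel (map (instMap v) ys) (map dom xs)
      else map2 relabel (map (instMap v) xs) (map dom ys))"
proof (induct xs arbitrary: ys)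
  case (Cons x xs)
  then show ?case
    by (cases ys) (simp_all add: instMap_mux_map)
qed simp

lemma map_instMap_pad: "map (instMap v) (pad N s) = pad_hist N (map (instMap v) s)"
  by (simp add: pad_def pad_hist_def instMap_top)

lemma hist_boxplus:
  "hist (boxplus h1 h2) v =
     (if v (merge_var h1 h2) then relabel_hist (merge_height h1 h2) (hoCl h1) (hist h2 v)
      else relabel_hist (merge_height h1 h2) (hoCl h2) (hist h1 v))"
  unfolding hist_def boxplus_def Let_def mux_stack_def hps.select_convs
  by (simp only: map_instMap_mux_map map_instMap_pad relabel_hist_def)

lemma ket_boxplus:
  "ket (boxplus h1 h2) v =
     (if v (merge_var h1 h2) then relabel (ket h2 v) (dom (hoQu h1))
      else relabel (ket h1 v) (dom (hoQu h2)))"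
  by (simp add: boxplus_def Let_def ket_def instMap_mux_map)

lemma seval_varprod:
  assumes "finite E"
  shows "seval v (varprod E) = of_bool (\<forall>y \<in> E. v y)"
proof -
  have "seval v (foldr (\<lambda>y e. SMul (SBool (BVar y)) e) ys (SConst 1)) = of_bool (\<forall>y \<in> set ys. v y)"
    for ys by (induct ys) auto
  then show ?thesis
    using assms by (simp add: varprod_def)
qed

lemma amp_boxplus:
  assumes "finite (hsu h1)" "finite (hsu h2)"
  shows "amp (boxplus h1 h2) v =
     (if v (merge_var h1 h2) then amp h2 v * of_bool (\<forall>y \<in> hsu h1 - hsu h2. v y)
      else amp h1 v * of_bool (\<forall>y \<in> hsu h2 - hsu h1. v y))"
  using assms by (simp add: boxplus_def Let_def amp_def seval_varprod algebra_simps)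

lemma xi_boxplus_split:
  fixes h1 h2 defines "h \<equiv> boxplus h1 h2"
  assumes "finite (hsu h)"
  shows "xi h \<eta> b =
      (\<Sum>v | v \<in> assignments (hsu h) \<and> \<not> v (merge_var h1 h2) \<and> (hist h v, ket h v) = (\<eta>, b). amp h v)
    + (\<Sum>v | v \<in> assignments (hsu h) \<and> v (merge_var h1 h2) \<and> (hist h v, ket h v) = (\<eta>, b). amp h v)"
proof -
  let ?A = "\<lambda>c. {v \<in> assignments (hsu h). v (merge_var h1 h2) = c \<and> (hist h v, ket h v) = (\<eta>, b)}"
  have "{v \<in> assignments (hsu h). hist h v = \<eta> \<and> ket h v = b} = ?A False \<union> ?A True"
    by auto
  then have "xi h \<eta> b = sum (amp h) (?A False) + sum (amp h) (?A True)"
    unfolding xi_eq_sum_amp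
    by (simp only:) (rule sum.union_disjoint; use finite_assignments[OF assms(2)] in auto)
  then show ?thesis
    by simp
qed

lemma hsupport_boxplus:
  assumes wf1: "wf_hps h1" and wf2: "wf_hps h2" and \<eta>: "\<eta> \<in> hsupport (boxplus h1 h2)"
  shows "(\<exists>\<eta>1 \<in> hsupport h1. \<eta> = relabel_hist (merge_height h1 h2) (hoCl h2) \<eta>1)
       \<or> (\<exists>\<eta>2 \<in> hsupport h2. \<eta> = relabel_hist (merge_height h1 h2) (hoCl h1) \<eta>2)"
proof -
  let ?h = "boxplus h1 h2" and ?y = "merge_var h1 h2" and ?N = "merge_height h1 h2"
  let ?obs = "\<lambda>v. (hist ?h v, ket ?h v)"
  have fin: "finite (hsu h1)" "finite (hsu h2)"
    using wf1 wf2 by (simp_all add: wf_hps_def)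
  then have y: "?y \<notin> hsu h1" "?y \<notin> hsu h2"
    using fresh_notin[of "hsu h1 \<union> hsu h2"] by auto
  have U: "finite (hsu ?h)" "hsu h1 \<subseteq> hsu ?h" "hsu h2 \<subseteq> hsu ?h"
    using fin by (auto simp: boxplus_def Let_def)
  obtain b where "xi ?h \<eta> b \<noteq> 0"
    using \<eta> by (auto simp: in_hsupport_iff)
  then consider
      "(\<Sum>v | v \<in> assignments (hsu ?h) \<and> \<not> v ?y \<and> ?obs v = (\<eta>, b). amp ?h v) \<noteq> 0"
    | "(\<Sum>v | v \<in> assignments (hsu ?h) \<and> v ?y \<and> ?obs v = (\<eta>, b). amp ?h v) \<noteq> 0"
    unfolding xi_boxplus_split[OF U(1)] by force
  then show ?thesis
  proof cases
    case 1
    have "vals_out (hsu h1) v x = v x" if "x \<notin> hsu h1" for v x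
      using that by (simp add: vals_out_def)
    then have "\<exists>v \<in> assignments (hsu ?h). \<not> v ?y \<and> ?obs v = (\<eta>, b) \<and> hist h1 v \<in> hsupport h1"
      using 1 y(1)
      by (intro hsupport_of_factored_sum[OF wf1 U(1,2),
            where F = "\<lambda>_ _ w. of_bool (\<forall>x \<in> hsu h2 - hsu h1. w x)"
            and G = "\<lambda>\<eta> b _. (relabel_hist ?N (hoCl h2) \<eta>, relabel b (dom (hoQu h2)))"])
         (simp_all add: amp_boxplus[OF fin] hist_boxplus ket_boxplus)
    then show ?thesis
      by (auto simp: hist_boxplus)
  next
    case 2
    have "vals_out (hsu h2) v x = v x" if "x \<notin> hsu h2" for v x
      using that by (simp add: vals_out_def)
    then have "\<exists>v \<in> assignments (hsu ?h). v ?y \<and> ?obs v = (\<eta>, b) \<and> hist h2 v \<in> hsupport h2"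
      using 2 y(2)
      by (intro hsupport_of_factored_sum[OF wf2 U(1,3),
            where F = "\<lambda>_ _ w. of_bool (\<forall>x \<in> hsu h1 - hsu h2. w x)"
            and G = "\<lambda>\<eta> b _. (relabel_hist ?N (hoCl h1) \<eta>, relabel b (dom (hoQu h1)))"])
         (simp_all add: amp_boxplus[OF fin] hist_boxplus ket_boxplus)
    then show ?thesis
      by (auto simp: hist_boxplus)
  qed
qed

lemma prefix_iff_nth:
  "prefix xs ys \<longleftrightarrow> length xs \<le> length ys \<and> (\<forall>i < length xs. xs ! i = ys ! i)"
proof
  assume "length xs \<le> length ys \<and> (\<forall>i < length xs. xs ! i = ys ! i)"
  then have "xs = take (length xs) ys"
    by (intro nth_equalityI) auto
  then show "prefix xs ys"
    by (metis take_is_prefix)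
qed (auto simp: prefix_def nth_append)

lemma length_pad: "length s \<le> N \<Longrightarrow> length (pad N s) = N"
  by (simp add: pad_def)

lemma nth_pad: "i < length s \<Longrightarrow> pad N s ! i = s ! i"
  by (simp add: pad_def nth_append)

lemma length_pad_hist: "length \<eta> \<le> N \<Longrightarrow> length (pad_hist N \<eta>) = N"
  by (simp add: pad_hist_def)

lemma nth_pad_hist: "i < length \<eta> \<Longrightarrow> pad_hist N \<eta> ! i = \<eta> ! i"
  by (simp add: pad_hist_def nth_append)

lemma relabel_self: "K \<subseteq> dom m \<Longrightarrow> relabel m K = m"
  by (auto simp: fun_eq_iff relabel_def domIff)

lemma prefix_relabel_hist:
  assumes "prefix \<eta>0 \<eta>" "prefix (map dom \<eta>0) (map dom s)" "length \<eta> \<le> N" "length s \<le> N"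
  shows "prefix \<eta>0 (relabel_hist N s \<eta>)"
  unfolding prefix_iff_nth
proof (intro conjI allI impI)
  have "length (relabel_hist N s \<eta>) = N"
    using assms(3,4) by (simp add: relabel_hist_def length_pad_hist length_pad)
  then show "length \<eta>0 \<le> length (relabel_hist N s \<eta>)"
    using assms(1,3) prefix_length_le by fastforce
  fix i assume i: "i < length \<eta>0"
  have "i < length \<eta>" "i < length s" "\<eta> ! i = \<eta>0 ! i" "dom (s ! i) = dom (\<eta>0 ! i)"
    using assms(1,2) i by (auto simp: prefix_iff_nth)
  then show "\<eta>0 ! i = relabel_hist N s \<eta> ! i"
    using assms(3,4)
    by (simp add: relabel_hist_def length_pad_hist length_pad nth_pad nth_pad_hist relabel_self)
qed

lemma dom_mux_map: "dom (mux_map y m1 m2) = dom m1 \<union> dom m2"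
  by (auto simp: mux_map_def split: if_splits)

definition stack_shape :: "hps \<Rightarrow> nat set list" where
  "stack_shape h = map dom (hoCl h)"

lemma hsupport_shape: "\<eta> \<in> hsupport h \<Longrightarrow> map dom \<eta> = stack_shape h"
proof -
  assume "\<eta> \<in> hsupport h"
  then obtain b where "xi h \<eta> b \<noteq> 0"
    by (auto simp: in_hsupport_iff)
  then obtain v where "hist h v = \<eta>"
    by (auto simp: xi_eq_sum_amp elim: sum.not_neutral_contains_not_neutral)
  then show ?thesis
    by (auto simp: hist_def stack_shape_def)
qed

lemma stack_shape_boxplus:
  assumes "prefix s (stack_shape h1)" "prefix s (stack_shape h2)"
  shows "prefix s (stack_shape (boxplus h1 h2))"
proof -
  let ?N = "merge_height h1 h2"
  have len: "length (pad ?N (hoCl h1)) = ?N" "length (pad ?N (hoCl h2)) = ?N"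
    by (simp_all add: length_pad)
  have "s ! i = stack_shape (boxplus h1 h2) ! i" if "i < length s" for i
    using assms that
    by (auto simp: prefix_iff_nth stack_shape_def boxplus_def Let_def mux_stack_def len
        nth_pad dom_mux_map)
  then show ?thesis
    using assms len
    by (auto simp: prefix_iff_nth stack_shape_def boxplus_def Let_def mux_stack_def)
qed

lemma support_extends_relabel_hist:
  assumes "support_extends h h1" "\<eta>1 \<in> hsupport h1" "prefix (stack_shape h) (map dom s)"
    and "length (hoCl h1) \<le> N" "length s \<le> N"
  shows "\<exists>\<eta>0 \<in> hsupport h. prefix \<eta>0 (relabel_hist N s \<eta>1)"
proof -
  obtain \<eta>0 where \<eta>0: "\<eta>0 \<in> hsupport h" "prefix \<eta>0 \<eta>1"
    using assms(1,2) by (auto simp: support_extends_def)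
  have "length \<eta>1 \<le> N"
    using hsupport_shape[OF assms(2)] assms(4) by (metis length_map stack_shape_def)
  then show ?thesis
    using \<eta>0 prefix_relabel_hist[OF \<eta>0(2)] hsupport_shape[OF \<eta>0(1)] assms(3,5) by auto
qed

lemma support_extends_boxplus:
  assumes "wf_hps h1" "wf_hps h2" "support_extends h h1" "support_extends h h2"
    and "prefix (stack_shape h) (stack_shape h1)" "prefix (stack_shape h) (stack_shape h2)"
  shows "support_extends h (boxplus h1 h2)"
  unfolding support_extends_def
proof
  fix \<eta> assume "\<eta> \<in> hsupport (boxplus h1 h2)"
  with hsupport_boxplus[OF assms(1,2)] show "\<exists>\<eta>0 \<in> hsupport h. prefix \<eta>0 \<eta>"
    using support_extends_relabel_hist[OF assms(3) _ assms(6)[unfolded stack_shape_def[of h2]]]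
      support_extends_relabel_hist[OF assms(4) _ assms(5)[unfolded stack_shape_def[of h1]]]
    by fastforce
qed

section \<open>Well-formedness\<close>

lemma bvars_ran_upd:
  "\<forall>e \<in> ran m. bvars e \<subseteq> S \<Longrightarrow> bvars e' \<subseteq> S \<Longrightarrow> \<forall>e \<in> ran (m(k \<mapsto> e')). bvars e \<subseteq> S"
  by (auto simp: ran_def split: if_splits)

lemma bvars_dflt: "\<forall>e \<in> ran m. bvars e \<subseteq> S \<Longrightarrow> bvars (dflt m k) \<subseteq> S"
  by (cases "m k") (auto simp: dflt_def ranI)

lemma top_in_set: "top s \<noteq> Map.empty \<Longrightarrow> top s \<in> set s"
  by (simp add: top_def split: if_splits)

lemma wf_hps_top:
  assumes "wf_hps h"
  shows "finite (dom (top (hoCl h))) \<and> (\<forall>e \<in> ran (top (hoCl h)). bvars e \<subseteq> hsu h)"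
proof (cases "top (hoCl h) = Map.empty")
  case False
  then show ?thesis
    using assms top_in_set unfolding wf_hps_def by blast
qed simp

lemma bvars_qval: "wf_hps h \<Longrightarrow> bvars (qval h q) \<subseteq> hsu h"
  unfolding qval_def wf_hps_def by (intro bvars_dflt) auto

lemma bvars_cval: "wf_hps h \<Longrightarrow> bvars (cval h c) \<subseteq> hsu h"
  by (simp add: cval_def bvars_dflt wf_hps_top)

lemma bvars_ceval: "wf_hps h \<Longrightarrow> bvars (ceval h c) \<subseteq> hsu h"
  by (induct c) (auto dest: bvars_qval bvars_cval)

lemma wf_hps_Init: "wf_hps h \<Longrightarrow> wf_hps (sem (Init q) h)"
  by (simp add: wf_hps_def) (intro bvars_ran_upd; simp)

lemma wf_hps_Apply:
  assumes wf: "wf_hps h"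
  shows "wf_hps (sem (Apply g q) h)"
proof (cases g)
  case GH
  let ?S = "insert (fresh (hsu h)) (hsu h)"
  have "\<forall>e \<in> ran ((hoQu h)(q \<mapsto> BVar (fresh (hsu h)))). bvars e \<subseteq> ?S"
    using wf unfolding wf_hps_def by (intro bvars_ran_upd) auto
  moreover have "\<forall>m \<in> set (hoCl h). finite (dom m) \<and> (\<forall>e \<in> ran m. bvars e \<subseteq> ?S)"
    using wf unfolding wf_hps_def by blast
  ultimately show ?thesis
    using wf bvars_qval[OF wf, of q] unfolding GH wf_hps_def by (auto simp: Let_def)
next
  case GX
  have "\<forall>e \<in> ran ((hoQu h)(q \<mapsto> BXor (BConst True) (qval h q))). bvars e \<subseteq> hsu h"
    using wf bvars_qval[OF wf, of q] unfolding wf_hps_def by (intro bvars_ran_upd) auto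
  then show ?thesis
    using wf unfolding GX wf_hps_def by simp
next
  case (GZ k)
  then show ?thesis
    using wf bvars_qval[OF wf, of q] by (simp add: wf_hps_def)
qed

lemma wf_hps_push:
  assumes "wf_hps h" "finite (dom m)" "\<forall>e \<in> ran m. bvars e \<subseteq> hsu h"
  shows "wf_hps (h\<lparr>hoCl := hoCl h @ [m]\<rparr>)"
  using assms by (simp add: wf_hps_def)

lemma wf_hps_Measure: "wf_hps h \<Longrightarrow> wf_hps (sem (Measure q c) h)"
  unfolding sem.simps
  by (intro wf_hps_push bvars_ran_upd) (simp_all add: wf_hps_top bvars_qval)

lemma wf_hps_Assign: "wf_hps h \<Longrightarrow> wf_hps (sem (Assign c1 f c2) h)"
  unfolding sem.simps
  by (intro wf_hps_push bvars_ran_upd) (simp_all add: wf_hps_top bvars_cval fpoly_def)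

lemma wf_hps_scale: "wf_hps h \<Longrightarrow> svars e \<subseteq> hsu h \<Longrightarrow> wf_hps (scale e h)"
  by (simp add: wf_hps_def scale_def)

lemma bvars_mux_map:
  assumes "\<forall>e \<in> ran m1. bvars e \<subseteq> S" "\<forall>e \<in> ran m2. bvars e \<subseteq> S" "y \<in> S"
  shows "\<forall>e \<in> ran (mux_map y m1 m2). bvars e \<subseteq> S"
  using assms(3) bvars_dflt[OF assms(1)] bvars_dflt[OF assms(2)]
  by (auto simp: ran_def mux_map_def muxb_def split: if_splits) blast+

lemma svars_varprod: "svars (varprod E) \<subseteq> E"
proof -
  have "svars (foldr (\<lambda>y e. SMul (SBool (BVar y)) e) ys (SConst 1)) = set ys" for ys
    by (induct ys) auto
  then show ?thesis
    by (cases "finite E") (simp_all add: varprod_def)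
qed

lemma wf_hps_boxplus:
  assumes wf1: "wf_hps h1" and wf2: "wf_hps h2"
  shows "wf_hps (boxplus h1 h2)"
proof -
  let ?y = "merge_var h1 h2" and ?N = "merge_height h1 h2"
  let ?S = "hsu h1 \<union> hsu h2 \<union> {?y}"
  have entry: "finite (dom m) \<and> (\<forall>e \<in> ran m. bvars e \<subseteq> ?S)"
    if "wf_hps h" "hsu h \<subseteq> ?S" "m \<in> set (pad ?N (hoCl h))" for h m
  proof -
    have "m \<in> set (hoCl h) \<or> m = top (hoCl h)"
      using that(3) by (auto simp: pad_def)
    then show ?thesis
      using that(1,2) wf_hps_top[OF that(1)] unfolding wf_hps_def by blast
  qed
  have "\<forall>m \<in> set (hoCl (boxplus h1 h2)). finite (dom m) \<and> (\<forall>e \<in> ran m. bvars e \<subseteq> ?S)"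
  proof
    fix m assume "m \<in> set (hoCl (boxplus h1 h2))"
    then obtain m1 m2 where m: "m = mux_map ?y m1 m2"
      and "m1 \<in> set (pad ?N (hoCl h1))" "m2 \<in> set (pad ?N (hoCl h2))"
      by (auto simp: boxplus_def Let_def mux_stack_def dest: set_zip_leftD set_zip_rightD)
    with entry[OF wf1] entry[OF wf2]
    have "finite (dom m1) \<and> (\<forall>e \<in> ran m1. bvars e \<subseteq> ?S)"
      "finite (dom m2) \<and> (\<forall>e \<in> ran m2. bvars e \<subseteq> ?S)"
      by auto
    then show "finite (dom m) \<and> (\<forall>e \<in> ran m. bvars e \<subseteq> ?S)"
      unfolding m dom_mux_map using bvars_mux_map[of m1 ?S m2 ?y] by simp
  qed
  moreover have "\<forall>e \<in> ran (hoQu (boxplus h1 h2)). bvars e \<subseteq> ?S"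
    unfolding boxplus_def Let_def hps.select_convs
    by (rule bvars_mux_map) (use wf1 wf2 in \<open>auto simp: wf_hps_def\<close>)
  moreover have "svars (hs (boxplus h1 h2)) \<subseteq> ?S"
    using wf1 wf2 svars_varprod[of "hsu h1 - hsu h2"] svars_varprod[of "hsu h2 - hsu h1"]
    by (auto simp: wf_hps_def boxplus_def Let_def)
  ultimately show ?thesis
    using wf1 wf2 by (auto simp: wf_hps_def boxplus_def Let_def dom_mux_map)
qed

section \<open>Programs\<close>

lemma wf_hps_sem: "wf_hps h \<Longrightarrow> wf_hps (sem p h)"
proof (induct p arbitrary: h)
  case (Init q)
  then show ?case by (rule wf_hps_Init)
next
  case (Apply g q)
  then show ?case by (rule wf_hps_Apply)
next
  case (Measure q c)
  then show ?case by (rule wf_hps_Measure)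
next
  case (Assign c1 f c2)
  then show ?case by (rule wf_hps_Assign)
next
  case (For a b body)
  show ?case
    unfolding sem.simps
    by (rule fold_invariant[where Q = "\<lambda>_. True"]) (auto intro: For)
next
  case (If c p1 p2)
  then show ?case
    using bvars_ceval[of h c] by (simp add: wf_hps_boxplus wf_hps_scale)
qed simp_all

lemma stack_shape_sem: "prefix (stack_shape h) (stack_shape (sem p h))"
proof (induct p arbitrary: h)
  case (Apply g q)
  then show ?case by (cases g) (simp_all add: stack_shape_def Let_def)
next
  case (Seq p1 p2)
  then show ?case by (metis prefix_order.trans sem.simps(6))
next
  case (For a b body)
  show ?case
    unfolding sem.simps
    by (rule fold_invariant[where Q = "\<lambda>_. True"]) (auto intro: prefix_order.trans[OF _ For])
next
  case (If c p1 p2)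
  have "stack_shape (scale e h) = stack_shape h" for e
    by (simp add: stack_shape_def scale_def)
  then show ?case
    using If[of "scale _ h"] by (simp add: stack_shape_boxplus)
qed (simp_all add: stack_shape_def)

lemma support_extends_If:
  assumes wf: "wf_hps h"
    and IH1: "\<And>h. wf_hps h \<Longrightarrow> support_extends h (sem p1 h)"
    and IH2: "\<And>h. wf_hps h \<Longrightarrow> support_extends h (sem p2 h)"
  shows "support_extends h (sem (If c p1 p2) h)"
proof -
  define h1 h2 where
    "h1 = scale (SBool (ceval h c)) h" and
    "h2 = scale (SAdd (SConst 1) (SNeg (SBool (ceval h c)))) h"
  have wf12: "wf_hps h1" "wf_hps h2"
    using wf bvars_ceval[of h c] by (simp_all add: h1_def h2_def wf_hps_scale)
  have "support_extends h h1" "support_extends h h2"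
    unfolding h1_def h2_def
    by (rule support_extends_scale, simp add: beval_ceval)+
  then have "support_extends h (sem p1 h1)" "support_extends h (sem p2 h2)"
    using IH1[OF wf12(1)] IH2[OF wf12(2)] support_extends_trans by blast+
  moreover have "stack_shape h1 = stack_shape h" "stack_shape h2 = stack_shape h"
    by (simp_all add: h1_def h2_def stack_shape_def scale_def)
  ultimately have "support_extends h (boxplus (sem p1 h1) (sem p2 h2))"
    using stack_shape_sem[of h1 p1] stack_shape_sem[of h2 p2] wf12
    by (intro support_extends_boxplus) (simp_all add: wf_hps_sem)
  then show ?thesis
    by (simp add: h1_def h2_def)
qed

lemma support_extends_sem: "wf_hps h \<Longrightarrow> support_extends h (sem p h)"
proof (induct p arbitrary: h)
  case Skip
  then show ?case by (simp add: support_extends_refl)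
next
  case (Init q)
  then show ?case by (rule support_extends_Init)
next
  case (Apply g q)
  then show ?case by (rule support_extends_Apply)
next
  case (Measure q c)
  then show ?case by (rule support_extends_Measure)
next
  case (Assign c1 f c2)
  then show ?case by (rule support_extends_Assign)
next
  case (Seq p1 p2)
  then show ?case
    using wf_hps_sem support_extends_trans by (metis sem.simps(6))
next
  case (For a b body)
  have "wf_hps (sem (For a b body) h) \<and> support_extends h (sem (For a b body) h)"
    unfolding sem.simps
    by (rule fold_invariant[where Q = "\<lambda>_. True"])
       (use For in \<open>auto intro: wf_hps_sem support_extends_refl support_extends_trans\<close>)
  then show ?case
    by blast
next
  case (If c p1 p2)
  from If.prems If.hyps show ?case
    by (rule support_extends_If)
qed

theorem mainTheorem5:
  shows "(\<forall>h p \<eta>. wf_hps h \<longrightarrow> wf_prog p \<longrightarrow> xi (sem p h) \<eta> \<noteq> (\<lambda>_. 0) \<longrightarrow>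
            (\<exists>\<eta>' \<in> hsupport h. prefix \<eta>' \<eta>))
       \<and> (\<forall>h h' p q l. wf_hps h \<longrightarrow> wf_hps h' \<longrightarrow> wf_prog p \<longrightarrow> wf_prog q \<longrightarrow>
            hsupport h \<inter> hsupport h' = {} \<longrightarrow>
            (\<forall>\<eta> \<in> hsupport h \<union> hsupport h'. length \<eta> = l) \<longrightarrow>
            hsupport (sem p h) \<inter> hsupport (sem q h') = {})"
proof (intro conjI allI impI)
  fix h p \<eta>
  assume "wf_hps h" "xi (sem p h) \<eta> \<noteq> (\<lambda>_. 0)"
  then show "\<exists>\<eta>' \<in> hsupport h. prefix \<eta>' \<eta>"
    using support_extends_sem unfolding support_extends_def hsupport_def by blast
next
  fix h h' p q l
  assume wf: "wf_hps h" "wf_hps h'" and disjoint: "hsupport h \<inter> hsupport h' = {}"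
    and len: "\<forall>\<eta> \<in> hsupport h \<union> hsupport h'. length \<eta> = l"
  show "hsupport (sem p h) \<inter> hsupport (sem q h') = {}"
  proof (rule equals0I)
    fix \<eta> assume "\<eta> \<in> hsupport (sem p h) \<inter> hsupport (sem q h')"
    then obtain \<eta>1 \<eta>2 where \<eta>12: "\<eta>1 \<in> hsupport h" "\<eta>2 \<in> hsupport h'" "prefix \<eta>1 \<eta>" "prefix \<eta>2 \<eta>"
      using support_extends_sem[OF wf(1), of p] support_extends_sem[OF wf(2), of q]
      unfolding support_extends_def by blast
    then have "\<eta>1 = take l \<eta>" "\<eta>2 = take l \<eta>"
      using len by (auto simp: prefix_def)
    with \<eta>12 disjoint show False
      by auto
  qed
qed

end
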